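(* Let $L(y,z)$ be a positive cell complexity function, monotonically increasing in $y$ and $z$, with $L(y,z)=\Theta(z^a)$ for some constant $a>0$ (i.e. there are constants $0<c_1\le c_2$ with $c_1z^a\le L(y,z)\le c_2 z^a$ for all arguments). Consider, as $N\to\infty$, a 1-layered FDCA $\mathcal{A}_1$ and a 2-layered FDCA $\mathcal{A}_2$ with working zone of size $N$ recognizing the same nontrivial class $D$ of input configurations, with $P_1=|D|$, $P_2$ the cardinality of the class of layer-$1$ local configurations recognized by the top (layer-2) cell of $\mathcal{A}_2$, $p$ the cardinality of the class of layer-$0$ local configurations recognized by a layer-$1$ cell of $\mathcal{A}_2$, and $n$ the size of the layer-$1$ basic neighborhood of $\mathcal{A}_2$ (all of $P_1,P_2,p$ positive). Then: (a) $\dfrac{L(N,P_2)}{L(N,P_1)}\to 0$ if and only if $\dfrac{P_2}{P_1}\to 0$; (b) if $p=o\!\left(P_1/N^{1/a}\right)$, then $\dfrac{N\cdot L(n,p)}{L(N,P_1)}\to 0$.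
   Context: An FDCA is a finite layered cellular automaton on $\mathbb{Z}^2$ with binary alphabets, square basic neighborhoods $N_i=[-r_i,r_i]^2$, a square working zone $W=[w]^2$ with fixed boundary conditions, where layer-$i$ states are computed as $X_i(c)=f_i(x_{i-1,c})$ with $x_{i-1,c}(z)=X_{i-1}(c+z)$, $z\in N_i$. An automaton recognizes a class $D$ of input configurations by a cell $c$ of layer $i$ if some state $k$ satisfies $X_i(c)=k$ iff $X_0\in D$; a cell recognizes a class of local configurations of the preceding layer analogously. A 1-layered (resp. 2-layered) FDCA has a cell $c$ with $c+N_1=W$ (resp. $c+N_2=W$), recognition being done by that top-layer cell, so its basic neighborhood has size $N=|W|$. The cell complexity $L(n,p)$ depends on the neighborhood size $n$ and the cardinality $p$ of the class of local configurations the cell recognizes. *)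

theory Defs
  imports Complex_Main "HOL-Library.Landau_Symbols"
begin

type_synonym cell = "int \<times> int"
type_synonym config = "cell \<Rightarrow> bool"

definition shift :: "cell \<Rightarrow> cell \<Rightarrow> cell" where
  "shift c z = (fst c + fst z, snd c + snd z)"

definition square_nb :: "nat \<Rightarrow> cell set" where
  "square_nb r = {- int r..int r} \<times> {- int r..int r}"

definition zone :: "nat \<Rightarrow> cell set" where
  "zone w = {1..int w} \<times> {1..int w}"

definition local_cfg :: "config \<Rightarrow> cell \<Rightarrow> cell set \<Rightarrow> config" where
  "local_cfg X c Nb = (\<lambda>z. if z \<in> Nb then X (shift c z) else False)"

definition next_layer :: "(config \<Rightarrow> bool) \<Rightarrow> cell set \<Rightarrow> nat \<Rightarrow> bool \<Rightarrow> config \<Rightarrow> config" where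
  "next_layer f Nb w b X = (\<lambda>c. if c \<in> zone w then f (local_cfg X c Nb) else b)"

definition inputs :: "nat \<Rightarrow> bool \<Rightarrow> config set" where
  "inputs w b = {X. \<forall>z. z \<notin> zone w \<longrightarrow> X z = b}"

definition class_of :: "(config \<Rightarrow> bool) \<Rightarrow> cell set \<Rightarrow> bool \<Rightarrow> config set" where
  "class_of f Nb k = {x. (\<forall>z. z \<notin> Nb \<longrightarrow> x z = False) \<and> f x = k}"

text \<open>A 1-layered FDCA (zone w, layer-0 boundary b0, layer-1 boundary b1,
  radius r1, local rule f1) recognizes D by its top cell c, with c + N_1 = W.\<close>
definition fdca1_recognizes ::
  "nat \<Rightarrow> bool \<Rightarrow> bool \<Rightarrow> nat \<Rightarrow> (config \<Rightarrow> bool) \<Rightarrow> cell \<Rightarrow> config set \<Rightarrow> bool" where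
  "fdca1_recognizes w b0 b1 r1 f1 c D \<longleftrightarrow>
     shift c ` square_nb r1 = zone w \<and> D \<subseteq> inputs w b0 \<and>
     (\<exists>k. \<forall>X \<in> inputs w b0.
        (next_layer f1 (square_nb r1) w b1 X c = k \<longleftrightarrow> X \<in> D))"

definition fdca2_recognizes ::
  "nat \<Rightarrow> bool \<Rightarrow> bool \<Rightarrow> bool \<Rightarrow> nat \<Rightarrow> (config \<Rightarrow> bool) \<Rightarrow> nat \<Rightarrow> (config \<Rightarrow> bool)
     \<Rightarrow> cell \<Rightarrow> bool \<Rightarrow> config set \<Rightarrow> bool" where
  "fdca2_recognizes w b0 b1 b2 r1 f1 r2 f2 c k D \<longleftrightarrow>
     shift c ` square_nb r2 = zone w \<and> D \<subseteq> inputs w b0 \<and>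
     (\<forall>X \<in> inputs w b0.
        (next_layer f2 (square_nb r2) w b2 (next_layer f1 (square_nb r1) w b1 X) c = k
          \<longleftrightarrow> X \<in> D))"

end

theory Submission
  imports Defs
begin

text \<open>Only the growth hypothesis on \<open>L\<close> matters. Two-sided bounds
  \<open>c\<^sub>1 z\<^sup>a \<le> L(y,z) \<le> c\<^sub>2 z\<^sup>a\<close> make every quotient \<open>L(y,z)/L(y',z')\<close> comparable, up to the
  factors \<open>c\<^sub>1/c\<^sub>2\<close> and \<open>c\<^sub>2/c\<^sub>1\<close>, with \<open>(z/z')\<^sup>a\<close>, and since \<open>a > 0\<close> the latter tends to 0
  exactly when \<open>z/z'\<close> does. For (b), \<open>N L(n,p)/L(N,P\<^sub>1)\<close> is bounded by a multiple of
  \<open>N (p/P\<^sub>1)\<^sup>a = (p N\<^sup>1\<^sup>/\<^sup>a/P\<^sub>1)\<^sup>a\<close>, and \<open>p = o(P\<^sub>1/N\<^sup>1\<^sup>/\<^sup>a)\<close> says precisely that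
  \<open>p N\<^sup>1\<^sup>/\<^sup>a/P\<^sub>1 \<rightarrow> 0\<close>.\<close>

lemma bigo_tendsto_zero:
  fixes f g :: "'a \<Rightarrow> 'b::real_normed_field"
  assumes "f \<in> O[F](g)" "(g \<longlongrightarrow> 0) F"
  shows "(f \<longlongrightarrow> 0) F"
proof -
  obtain C where "C > 0" "eventually (\<lambda>x. norm (f x) \<le> C * norm (g x)) F"
    using assms(1) by (rule landau_o.bigE)
  then have "eventually (\<lambda>x. norm (f x) \<le> norm (g x) * C) F"
    by (simp add: mult.commute)
  then show ?thesis
    by (rule tendsto_0_le[OF assms(2)])
qed

lemma bigtheta_tendsto_zero_iff:
  fixes f g :: "'a \<Rightarrow> 'b::real_normed_field"
  assumes "f \<in> \<Theta>[F](g)"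
  shows "(f \<longlongrightarrow> 0) F \<longleftrightarrow> (g \<longlongrightarrow> 0) F"
proof -
  have "f \<in> O[F](g)" "g \<in> O[F](f)"
    using assms bigtheta_sym[of f F g] by (auto dest: bigthetaD1)
  then show ?thesis
    using bigo_tendsto_zero[of f F g] bigo_tendsto_zero[of g F f] by blast
qed

lemma tendsto_zero_powr_iff:
  fixes f :: "'a \<Rightarrow> real"
  assumes "a > 0" "\<And>x. f x \<ge> 0"
  shows "((\<lambda>x. f x powr a) \<longlongrightarrow> 0) F \<longleftrightarrow> (f \<longlongrightarrow> 0) F"
proof
  assume "((\<lambda>x. f x powr a) \<longlongrightarrow> 0) F"
  then have "((\<lambda>x. (f x powr a) powr (1 / a)) \<longlongrightarrow> 0) F"
    by (rule tendsto_zero_powrI[where b = "1 / a"]) (use assms in auto)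
  moreover have "(f x powr a) powr (1 / a) = f x" for x
    using assms by (simp add: powr_powr)
  ultimately show "(f \<longlongrightarrow> 0) F"
    by simp
next
  assume "(f \<longlongrightarrow> 0) F"
  then show "((\<lambda>x. f x powr a) \<longlongrightarrow> 0) F"
    by (rule tendsto_zero_powrI[where b = a]) (use assms in auto)
qed

lemma quotient_powr_bounds:
  fixes L :: "'a \<Rightarrow> nat \<Rightarrow> real" and a c1 c2 :: real
  assumes c1_pos: "c1 > 0"
    and L_bounds: "\<And>y z. z \<ge> 1 \<Longrightarrow> c1 * real z powr a \<le> L y z \<and> L y z \<le> c2 * real z powr a"
    and "z \<ge> 1" "z' \<ge> 1"
  shows "L y z / L y' z' \<le> c2 / c1 * (real z / real z') powr a"
    and "c1 / c2 * (real z / real z') powr a \<le> L y z / L y' z'"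
    and "L y z / L y' z' > 0"
proof -
  have lower: "c1 * real z powr a \<le> L y z" "c1 * real z' powr a \<le> L y' z'"
    and upper: "L y z \<le> c2 * real z powr a" "L y' z' \<le> c2 * real z' powr a"
    using L_bounds \<open>z \<ge> 1\<close> \<open>z' \<ge> 1\<close> by auto
  have "c1 * real z powr a > 0" "c1 * real z' powr a > 0"
    using c1_pos \<open>z \<ge> 1\<close> \<open>z' \<ge> 1\<close> by simp_all
  then have pos: "L y z > 0" "L y' z' > 0" "c2 * real z powr a > 0"
    using lower upper by linarith+
  then show "L y z / L y' z' > 0"
    by simp
  have "L y z / L y' z' \<le> c2 * real z powr a / (c1 * real z' powr a)"
    using lower upper pos \<open>c1 * real z' powr a > 0\<close> by (intro frac_le) auto
  moreover have "c1 * real z powr a / (c2 * real z' powr a) \<le> L y z / L y' z'"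
    using lower upper pos by (intro frac_le) auto
  ultimately show "L y z / L y' z' \<le> c2 / c1 * (real z / real z') powr a"
    and "c1 / c2 * (real z / real z') powr a \<le> L y z / L y' z'"
    by (simp_all add: powr_divide)
qed

lemma quotient_tendsto_zero_iff:
  fixes L :: "'a \<Rightarrow> nat \<Rightarrow> real" and a c1 c2 :: real
    and y y' :: "'b \<Rightarrow> 'a" and z z' :: "'b \<Rightarrow> nat"
  assumes a_pos: "a > 0" and c1_pos: "c1 > 0"
    and L_bounds: "\<And>y z. z \<ge> 1 \<Longrightarrow> c1 * real z powr a \<le> L y z \<and> L y z \<le> c2 * real z powr a"
    and z_ge: "\<And>j. z j \<ge> 1" and z'_ge: "\<And>j. z' j \<ge> 1"
  shows "((\<lambda>j. L (y j) (z j) / L (y' j) (z' j)) \<longlongrightarrow> 0) F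
    \<longleftrightarrow> ((\<lambda>j. real (z j) / real (z' j)) \<longlongrightarrow> 0) F"
proof -
  have "c1 \<le> c2"
    using L_bounds[where z = 1] by fastforce
  have "c1 / c2 * norm ((real (z j) / real (z' j)) powr a) \<le> norm (L (y j) (z j) / L (y' j) (z' j))
      \<and> norm (L (y j) (z j) / L (y' j) (z' j)) \<le> c2 / c1 * norm ((real (z j) / real (z' j)) powr a)" for j
    using quotient_powr_bounds[where L = L, OF c1_pos L_bounds z_ge z'_ge]
    by (simp only: real_norm_def abs_of_pos abs_of_nonneg powr_ge_zero)
  then have "(\<lambda>j. L (y j) (z j) / L (y' j) (z' j)) \<in> \<Theta>[F](\<lambda>j. (real (z j) / real (z' j)) powr a)"
    using c1_pos \<open>c1 \<le> c2\<close> by (intro bigthetaI'[of "c1 / c2" "c2 / c1"] always_eventually) auto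
  then have "((\<lambda>j. L (y j) (z j) / L (y' j) (z' j)) \<longlongrightarrow> 0) F
      \<longleftrightarrow> ((\<lambda>j. (real (z j) / real (z' j)) powr a) \<longlongrightarrow> 0) F"
    by (rule bigtheta_tendsto_zero_iff)
  also have "\<dots> \<longleftrightarrow> ((\<lambda>j. real (z j) / real (z' j)) \<longlongrightarrow> 0) F"
    by (rule tendsto_zero_powr_iff[OF a_pos]) simp
  finally show ?thesis .
qed

lemma scaled_quotient_tendsto_zero:
  fixes L :: "'a \<Rightarrow> nat \<Rightarrow> real" and a c1 c2 :: real
    and y y' :: "'b \<Rightarrow> 'a" and z z' m :: "'b \<Rightarrow> nat"
  assumes a_pos: "a > 0" and c1_pos: "c1 > 0"
    and L_bounds: "\<And>y z. z \<ge> 1 \<Longrightarrow> c1 * real z powr a \<le> L y z \<and> L y z \<le> c2 * real z powr a"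
    and z_ge: "\<And>j. z j \<ge> 1" and z'_ge: "\<And>j. z' j \<ge> 1"
    and small: "(\<lambda>j. real (z j)) \<in> o[F](\<lambda>j. real (z' j) / real (m j) powr (1 / a))"
  shows "((\<lambda>j. real (m j) * L (y j) (z j) / L (y' j) (z' j)) \<longlongrightarrow> 0) F"
proof -
  define x where "x = (\<lambda>j. real (z j) * real (m j) powr (1 / a) / real (z' j))"
  have "(x \<longlongrightarrow> 0) F"
    using smalloD_tendsto[OF small] by (simp add: x_def)
  then have "((\<lambda>j. x j powr a) \<longlongrightarrow> 0) F"
    using tendsto_zero_powr_iff[OF a_pos, of x] by (simp add: x_def)
  moreover have "(\<lambda>j. real (m j) * L (y j) (z j) / L (y' j) (z' j)) \<in> O[F](\<lambda>j. x j powr a)"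
  proof (rule bigoI)
    have "L (y j) (z j) / L (y' j) (z' j) \<le> c2 / c1 * (real (z j) / real (z' j)) powr a" for j
      by (rule quotient_powr_bounds(1)[where L = L, OF c1_pos L_bounds z_ge z'_ge])
    then have "real (m j) * L (y j) (z j) / L (y' j) (z' j)
        \<le> real (m j) * (c2 / c1 * (real (z j) / real (z' j)) powr a)" for j
      by (metis mult_left_mono of_nat_0_le_iff times_divide_eq_right)
    also have "real (m j) * (c2 / c1 * (real (z j) / real (z' j)) powr a) = c2 / c1 * x j powr a" for j
      using a_pos by (simp add: x_def powr_mult powr_divide powr_powr)
    finally have "real (m j) * L (y j) (z j) / L (y' j) (z' j) \<le> c2 / c1 * x j powr a" for j .
    moreover have "real (m j) * L (y j) (z j) / L (y' j) (z' j) \<ge> 0" for j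
      using quotient_powr_bounds(3)[where L = L, OF c1_pos L_bounds z_ge z'_ge]
      by (metis times_divide_eq_right mult_nonneg_nonneg of_nat_0_le_iff less_imp_le)
    ultimately show "\<forall>\<^sub>F j in F.
        norm (real (m j) * L (y j) (z j) / L (y' j) (z' j)) \<le> c2 / c1 * norm (x j powr a)"
      by (intro always_eventually allI) (simp only: real_norm_def abs_of_nonneg powr_ge_zero)
  qed
  ultimately show ?thesis
    using bigo_tendsto_zero by blast
qed

theorem corollary10:
  fixes L :: "nat \<Rightarrow> nat \<Rightarrow> real" and a c1 c2 :: real
    and w :: "nat \<Rightarrow> nat" and b0 :: "nat \<Rightarrow> bool" and D :: "nat \<Rightarrow> config set"
    \<comment> \<open>1-layered FDCA A1\<close>
    and ba1 :: "nat \<Rightarrow> bool" and ra :: "nat \<Rightarrow> nat" and fa :: "nat \<Rightarrow> config \<Rightarrow> bool"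
    and ca :: "nat \<Rightarrow> cell"
    \<comment> \<open>2-layered FDCA A2\<close>
    and b1 b2 :: "nat \<Rightarrow> bool" and r1 r2 :: "nat \<Rightarrow> nat" and f1 f2 :: "nat \<Rightarrow> config \<Rightarrow> bool"
    and c :: "nat \<Rightarrow> cell" and k k1 :: "nat \<Rightarrow> bool"
    and N P1 P2 p n :: "nat \<Rightarrow> nat"
  assumes L_pos: "\<And>y z. L y z > 0"
    and L_mono: "\<And>y y' z z'. y \<le> y' \<Longrightarrow> z \<le> z' \<Longrightarrow> L y z \<le> L y' z'"
    and a_pos: "a > 0" and c1_pos: "0 < c1" and c12: "c1 \<le> c2"
    and L_Theta: "\<And>y z. z \<ge> 1 \<Longrightarrow> c1 * real z powr a \<le> L y z \<and> L y z \<le> c2 * real z powr a"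
    and A1: "\<And>j. fdca1_recognizes (w j) (b0 j) (ba1 j) (ra j) (fa j) (ca j) (D j)"
    and A2: "\<And>j. fdca2_recognizes (w j) (b0 j) (b1 j) (b2 j) (r1 j) (f1 j) (r2 j) (f2 j)
                  (c j) (k j) (D j)"
    and nontriv: "\<And>j. D j \<noteq> {} \<and> D j \<noteq> inputs (w j) (b0 j)"
    and N_def: "\<And>j. N j = card (zone (w j))"
    and N_lim: "filterlim N at_top sequentially"
    and P1_def: "\<And>j. P1 j = card (D j)"
    and P2_def: "\<And>j. P2 j = card (class_of (f2 j) (square_nb (r2 j)) (k j))"
    and p_def: "\<And>j. p j = card (class_of (f1 j) (square_nb (r1 j)) (k1 j))"
    and n_def: "\<And>j. n j = card (square_nb (r1 j))"
    and pos: "\<And>j. P1 j > 0 \<and> P2 j > 0 \<and> p j > 0"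
  shows "((\<lambda>j. L (N j) (P2 j) / L (N j) (P1 j)) \<longlonglongrightarrow> 0
           \<longleftrightarrow> (\<lambda>j. real (P2 j) / real (P1 j)) \<longlonglongrightarrow> 0)
     \<and> ((\<lambda>j. real (p j)) \<in> o(\<lambda>j. real (P1 j) / real (N j) powr (1 / a))
           \<longrightarrow> (\<lambda>j. real (N j) * L (n j) (p j) / L (N j) (P1 j)) \<longlonglongrightarrow> 0)"
proof -
  have ge1: "P1 j \<ge> 1" "P2 j \<ge> 1" "p j \<ge> 1" for j
    using pos[of j] by auto
  show ?thesis
    using quotient_tendsto_zero_iff[where L = L and y = N and y' = N and z = P2 and z' = P1,
        OF a_pos c1_pos L_Theta ge1(2) ge1(1)]
      scaled_quotient_tendsto_zero[where L = L and y = n and y' = N and z = p and z' = P1 and m = N,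
        OF a_pos c1_pos L_Theta ge1(3) ge1(1)]
    by blast
qed

end
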